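(* There exists a Stackelberg game $(G,L,F)$ that admits no SCE-PAPE, i.e. $\mathbf{X}^{SCE\text{-}PAPE}=\emptyset$.
   Context: A finite game is $G=(N,\{S_p\}_{p\in N},\{u_p\}_{p\in N})$ with players $N=\{1,\dots,n\}$, finite nonempty strategy sets $S_p$, and utilities $u_p:S\to\mathbb{R}$ on $S=\prod_{p\in N}S_p$; write $s=(s_p,s_{-p})$ with $s_{-p}\in S_{-p}=\prod_{q\neq p}S_q$. $\mathcal{X}=\Delta(S)$ is the set of probability distributions on $S$ and $u_p(x)=\sum_{s\in S}x(s)u_p(s)$ for $x\in\mathcal{X}$. For $P\subseteq N$, $\mathcal{X}^{CE}_P$ is the set of $x\in\mathcal{X}$ such that for every $p\in P$ and all $s_p\neq s_p'\in S_p$: $\sum_{s_{-p}\in S_{-p}} x(s_p,s_{-p})\,(u_p(s_p,s_{-p})-u_p(s_p',s_{-p}))\ge 0$; $\mathcal{X}^{CE}=\mathcal{X}^{CE}_N$ is the set of correlated equilibria of $G$. A Stackelberg game (SG) is a triple $(G,L,F)$ with $L\cup F=N$ and $L\cap F=\emptyset$ (leaders and followers). For $P\subseteq N$, $\Pi_P$ is the set of ordered subsets of $P$ (finite sequences of pairwise distinct elements of $P$, including the empty sequence $\varnothing$); for $\pi\in\Pi_P$ and $p\in P$ not occurring in $\pi$, $\pi p$ is $\pi$ with $p$ appended; when used as a set, $\pi$ means its set of entries. $\mathbf{X}=\prod_{\pi\in\Pi_L}\mathcal{X}^{CE}_{\pi\cup F}$, with elements $\mathbf{x}=[x_\pi]_{\pi\in\Pi_L}$.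 For $\mathbf{x}\in\mathbf{X}$ and $\pi\in\Pi_L$, $x_\pi$ is stable if $u_p(x_\pi)\ge u_p(x_{\pi p})$ for all $p\in L\setminus\pi$; $\mathbf{x}$ is stable if $x_\varnothing$ is stable, and perfectly stable if $x_\pi$ is stable for every $\pi\in\Pi_L$; $\mathbf{X}^{S}$ and $\mathbf{X}^{PS}$ denote the sets of stable and perfectly stable elements of $\mathbf{X}$. For $\mathbf{X}'\subseteq\mathbf{X}$ and $\pi\in\Pi_L$, $\mathcal{P}_{L\setminus\pi}(\mathbf{X}')$ is the set of Pareto optimal elements of $\{x'_\pi:\mathbf{x}'\in\mathbf{X}'\}$ with respect to the objectives $u_p$, $p\in L\setminus\pi$ (an element $y$ of the set is Pareto optimal if no $y'$ in the set satisfies $u_p(y')\ge u_p(y)$ for all $p\in L\setminus\pi$ with strict inequality for some such $p$). $\mathbf{x}\in\mathbf{X}$ is an SCE-PAPE if $\mathbf{x}\in\mathbf{X}^{PS}$ and $x_\pi\in\mathcal{P}_{L\setminus\pi}(\mathbf{X}^{PS})$ for every $\pi\in\Pi_L$; $\mathbf{X}^{SCE\text{-}PAPE}$ is the set of SCE-PAPEs. *)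

theory Defs
  imports Complex_Main "HOL-Library.FuncSet"
begin

type_synonym profile = "nat \<Rightarrow> nat"
type_synonym dist = "profile \<Rightarrow> real"

definition players :: "nat \<Rightarrow> nat set" where
  "players n = {1..n}"

definition finite_game :: "nat \<Rightarrow> (nat \<Rightarrow> nat set) \<Rightarrow> bool" where
  "finite_game n S \<longleftrightarrow> (\<forall>p\<in>players n. finite (S p) \<and> S p \<noteq> {})"

definition profiles :: "nat \<Rightarrow> (nat \<Rightarrow> nat set) \<Rightarrow> profile set" where
  "profiles n S = PiE (players n) S"

definition is_dist :: "nat \<Rightarrow> (nat \<Rightarrow> nat set) \<Rightarrow> dist \<Rightarrow> bool" where
  "is_dist n S x \<longleftrightarrow> (\<forall>s. 0 \<le> x s) \<and> (\<forall>s. s \<notin> profiles n S \<longrightarrow> x s = 0)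
     \<and> (\<Sum>s\<in>profiles n S. x s) = 1"

definition EU :: "nat \<Rightarrow> (nat \<Rightarrow> nat set) \<Rightarrow> (nat \<Rightarrow> profile \<Rightarrow> real) \<Rightarrow> nat \<Rightarrow> dist \<Rightarrow> real" where
  "EU n S u p x = (\<Sum>s\<in>profiles n S. x s * u p s)"

text \<open>X^CE_P: distributions satisfying the correlated-equilibrium constraints of all p in P.
The sum over s_{-p} with s_p fixed is the sum over profiles s with s p = a.\<close>
definition CE_P :: "nat \<Rightarrow> (nat \<Rightarrow> nat set) \<Rightarrow> (nat \<Rightarrow> profile \<Rightarrow> real) \<Rightarrow> nat set \<Rightarrow> dist set" where
  "CE_P n S u P = {x. is_dist n S x \<and>
     (\<forall>p\<in>P. \<forall>a\<in>S p. \<forall>b\<in>S p. a \<noteq> b \<longrightarrow>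
        0 \<le> (\<Sum>s\<in>{s\<in>profiles n S. s p = a}. x s * (u p s - u p (s(p := b)))))}"

definition stackelberg :: "nat \<Rightarrow> nat set \<Rightarrow> nat set \<Rightarrow> bool" where
  "stackelberg n L F \<longleftrightarrow> L \<union> F = players n \<and> L \<inter> F = {}"

definition ordered_subsets :: "nat set \<Rightarrow> nat list set" where
  "ordered_subsets P = {\<pi>. distinct \<pi> \<and> set \<pi> \<subseteq> P}"

definition XX :: "nat \<Rightarrow> (nat \<Rightarrow> nat set) \<Rightarrow> (nat \<Rightarrow> profile \<Rightarrow> real) \<Rightarrow> nat set \<Rightarrow> nat set
    \<Rightarrow> (nat list \<Rightarrow> dist) set" where
  "XX n S u L F = {xx. (\<forall>\<pi>\<in>ordered_subsets L. xx \<pi> \<in> CE_P n S u (set \<pi> \<union> F))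
      \<and> (\<forall>\<pi>. \<pi> \<notin> ordered_subsets L \<longrightarrow> xx \<pi> = (\<lambda>_. 0))}"

definition stable_at :: "nat \<Rightarrow> (nat \<Rightarrow> nat set) \<Rightarrow> (nat \<Rightarrow> profile \<Rightarrow> real) \<Rightarrow> nat set
    \<Rightarrow> (nat list \<Rightarrow> dist) \<Rightarrow> nat list \<Rightarrow> bool" where
  "stable_at n S u L xx \<pi> \<longleftrightarrow>
     (\<forall>p\<in>L - set \<pi>. EU n S u p (xx \<pi>) \<ge> EU n S u p (xx (\<pi> @ [p])))"

definition perfectly_stable_set :: "nat \<Rightarrow> (nat \<Rightarrow> nat set) \<Rightarrow> (nat \<Rightarrow> profile \<Rightarrow> real) \<Rightarrow> nat set
    \<Rightarrow> nat set \<Rightarrow> (nat list \<Rightarrow> dist) set" where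
  "perfectly_stable_set n S u L F =
     {xx \<in> XX n S u L F. \<forall>\<pi>\<in>ordered_subsets L. stable_at n S u L xx \<pi>}"

definition pareto_opt :: "nat \<Rightarrow> (nat \<Rightarrow> nat set) \<Rightarrow> (nat \<Rightarrow> profile \<Rightarrow> real) \<Rightarrow> nat set
    \<Rightarrow> dist set \<Rightarrow> dist set" where
  "pareto_opt n S u P Y = {y \<in> Y. \<not> (\<exists>y'\<in>Y. (\<forall>p\<in>P. EU n S u p y' \<ge> EU n S u p y)
        \<and> (\<exists>p\<in>P. EU n S u p y' > EU n S u p y))}"

definition SCE_PAPE :: "nat \<Rightarrow> (nat \<Rightarrow> nat set) \<Rightarrow> (nat \<Rightarrow> profile \<Rightarrow> real) \<Rightarrow> nat set
    \<Rightarrow> nat set \<Rightarrow> (nat list \<Rightarrow> dist) set" where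
  "SCE_PAPE n S u L F =
     {xx \<in> perfectly_stable_set n S u L F. \<forall>\<pi>\<in>ordered_subsets L.
        xx \<pi> \<in> pareto_opt n S u (L - set \<pi>) ((\<lambda>xx'. xx' \<pi>) ` perfectly_stable_set n S u L F)}"

end

theory Submission
  imports Defs
begin

text \<open>Take two leaders and no followers in a 3x3 game. After leader 1 commits, the
obedience constraints of player 1 leave only the cell (0,0) and row 2. Some perfectly stable
family realises (0,0) there, answering any further move with the pure equilibrium (2,2), so
Pareto optimality gives player 2 at least 2, which forces (0,0) and payoff 3 for leader 1.
Symmetrically, after leader 2 commits the outcome is (1,1) with payoff 6 for leader 2.
Stability of the uncommitted distribution then requires \<open>2 u\<^sub>1 + u\<^sub>2 \<ge> 12\<close>, whereas
\<open>2 u\<^sub>1 + u\<^sub>2 \<le> 8\<close> in every cell.\<close>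

lemma CE_P_antimono: "P \<subseteq> Q \<Longrightarrow> CE_P n S u Q \<subseteq> CE_P n S u P"
  unfolding CE_P_def by blast

definition point_dist :: "profile \<Rightarrow> dist" where
  "point_dist t = (\<lambda>s. if s = t then 1 else 0)"

lemma sum_point_dist_mult:
  assumes "finite A"
  shows "(\<Sum>s\<in>A. point_dist t s * f s) = (if t \<in> A then f t else 0)"
proof -
  have "point_dist t s * f s = (if t = s then f s else 0)" for s
    by (simp add: point_dist_def)
  then show ?thesis
    using assms by (simp add: sum.delta)
qed

lemma is_dist_point_dist:
  assumes "finite (profiles n S)" "t \<in> profiles n S"
  shows "is_dist n S (point_dist t)"
  using sum_point_dist_mult[OF assms(1), of t "\<lambda>_. 1"] assms
  unfolding is_dist_def by (auto simp: point_dist_def)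

lemma EU_point_dist:
  "finite (profiles n S) \<Longrightarrow> t \<in> profiles n S \<Longrightarrow> EU n S u p (point_dist t) = u p t"
  unfolding EU_def by (simp add: sum_point_dist_mult)

lemma point_dist_in_CE_P:
  assumes fin: "finite (profiles n S)" and t: "t \<in> profiles n S"
    and nash: "\<And>p b. p \<in> P \<Longrightarrow> b \<in> S p \<Longrightarrow> u p (t(p := b)) \<le> u p t"
  shows "point_dist t \<in> CE_P n S u P"
proof -
  have "0 \<le> (\<Sum>s\<in>{s\<in>profiles n S. s p = a}. point_dist t s * (u p s - u p (s(p := b))))"
    if "p \<in> P" "b \<in> S p" for p a b
    using fin t nash[OF that] by (simp add: sum_point_dist_mult)
  then show ?thesis
    unfolding CE_P_def using is_dist_point_dist[OF fin t] by blast
qed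

lemma pareto_opt_singleton_max:
  "y \<in> pareto_opt n S u {p} Y \<Longrightarrow> y' \<in> Y \<Longrightarrow> EU n S u p y' \<le> EU n S u p y"
  unfolding pareto_opt_def by force

lemma EU_weighted_le:
  assumes x: "is_dist n S x" and bound: "\<And>s. s \<in> profiles n S \<Longrightarrow> c * u p s + d * u q s \<le> M"
  shows "c * EU n S u p x + d * EU n S u q x \<le> M"
proof -
  have "c * EU n S u p x + d * EU n S u q x = (\<Sum>s\<in>profiles n S. x s * (c * u p s + d * u q s))"
    unfolding EU_def by (simp add: sum_distrib_left sum.distrib algebra_simps)
  also have "\<dots> \<le> (\<Sum>s\<in>profiles n S. x s * M)"
    using x bound by (intro sum_mono mult_left_mono) (auto simp: is_dist_def)
  also have "\<dots> = M"
    using x by (simp add: is_dist_def flip: sum_distrib_right)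
  finally show ?thesis .
qed

definition first_mover_family :: "nat set \<Rightarrow> nat \<Rightarrow> dist \<Rightarrow> dist \<Rightarrow> nat list \<Rightarrow> dist" where
  "first_mover_family L i y e \<pi> =
     (if \<pi> \<in> ordered_subsets L then if \<pi> = [] \<or> \<pi> = [i] then y else e else (\<lambda>_. 0))"

lemma first_mover_family_perfectly_stable:
  assumes y: "y \<in> CE_P n S u ({i} \<union> F)" and e: "e \<in> CE_P n S u (L \<union> F)"
    and prefer_y: "\<And>j. j \<in> L \<Longrightarrow> j \<noteq> i \<Longrightarrow> EU n S u j e \<le> EU n S u j y"
  shows "first_mover_family L i y e \<in> perfectly_stable_set n S u L F"
proof -
  let ?xx = "first_mover_family L i y e"
  have "?xx \<pi> \<in> CE_P n S u (set \<pi> \<union> F)" if "\<pi> \<in> ordered_subsets L" for \<pi>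
  proof -
    have "set \<pi> \<union> F \<subseteq> L \<union> F" using that by (auto simp: ordered_subsets_def)
    moreover have "set \<pi> \<union> F \<subseteq> {i} \<union> F" if "\<pi> = [] \<or> \<pi> = [i]" using that by auto
    ultimately show ?thesis
      using that subsetD[OF CE_P_antimono y] subsetD[OF CE_P_antimono e]
      by (simp add: first_mover_family_def)
  qed
  then have "?xx \<in> XX n S u L F"
    unfolding XX_def by (simp add: first_mover_family_def)
  moreover have "stable_at n S u L ?xx \<pi>" if \<pi>: "\<pi> \<in> ordered_subsets L" for \<pi>
    unfolding stable_at_def
  proof
    fix p assume p: "p \<in> L - set \<pi>"
    then have "\<pi> @ [p] \<in> ordered_subsets L" using \<pi> by (auto simp: ordered_subsets_def)
    then show "EU n S u p (?xx (\<pi> @ [p])) \<le> EU n S u p (?xx \<pi>)"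
      using \<pi> p prefer_y[of p] by (cases \<pi>) (auto simp: first_mover_family_def)
  qed
  ultimately show ?thesis
    unfolding perfectly_stable_set_def by blast
qed

definition ex_strategies :: "nat \<Rightarrow> nat set" where
  "ex_strategies p = {0, 1, 2}"

text \<open>Rows are indexed by the action of player 1, columns by the action of player 2.\<close>
definition ex_payoff :: "nat \<Rightarrow> real list list" where
  "ex_payoff p =
     (if p = 1 then [[3, 0, -1], [0, 1, -1], [3, 2, 0]] else [[2, 0, 4], [0, 6, 6], [0, 0, 1]])"

definition ex_utility :: "nat \<Rightarrow> profile \<Rightarrow> real" where
  "ex_utility p s = ex_payoff p ! s 1 ! s 2"

text \<open>The value \<open>undefined\<close> off the players makes the profile extensional, as membership
in \<open>profiles\<close> requires.\<close>
definition ex_profile :: "nat \<Rightarrow> nat \<Rightarrow> profile" where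
  "ex_profile a b = (\<lambda>i. if i = 1 then a else if i = 2 then b else undefined)"

abbreviation "ex_EU \<equiv> EU 2 ex_strategies ex_utility"
abbreviation "ex_CE \<equiv> CE_P 2 ex_strategies ex_utility"

lemma players_2: "players 2 = {1, 2}"
  by (auto simp: players_def)

text \<open>Stated at \<open>Suc 0\<close> rather than \<open>1\<close>: that is the form player 1 takes after
simplification.\<close>
lemma ex_profile_apply [simp]: "ex_profile a b (Suc 0) = a" "ex_profile a b 2 = b"
  by (simp_all add: ex_profile_def)

lemma ex_profile_inject [simp]: "ex_profile a b = ex_profile c d \<longleftrightarrow> a = c \<and> b = d"
  by (metis ex_profile_apply)

lemma ex_profile_upd [simp]:
  "(ex_profile a b)(Suc 0 := c) = ex_profile c b" "(ex_profile a b)(2 := c) = ex_profile a c"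
  by (auto simp: ex_profile_def fun_eq_iff)

lemma ex_utility_ex_profile [simp]: "ex_utility p (ex_profile a b) = ex_payoff p ! a ! b"
  by (simp add: ex_utility_def ex_profile_def)

lemma ex_profiles: "profiles 2 ex_strategies = case_prod ex_profile ` ({0, 1, 2} \<times> {0, 1, 2})"
proof
  show "profiles 2 ex_strategies \<subseteq> case_prod ex_profile ` ({0, 1, 2} \<times> {0, 1, 2})"
  proof
    fix s assume "s \<in> profiles 2 ex_strategies"
    then have "s 1 \<in> {0, 1, 2}" "s 2 \<in> {0, 1, 2}" "s = ex_profile (s 1) (s 2)"
      by (auto simp: profiles_def players_2 ex_strategies_def ex_profile_def PiE_iff
          extensional_def fun_eq_iff)
    then show "s \<in> case_prod ex_profile ` ({0, 1, 2} \<times> {0, 1, 2})"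
      by (metis SigmaI image_eqI case_prod_conv)
  qed
  show "case_prod ex_profile ` ({0, 1, 2} \<times> {0, 1, 2}) \<subseteq> profiles 2 ex_strategies"
    by (auto simp: profiles_def players_2 ex_strategies_def ex_profile_def PiE_iff extensional_def)
qed

lemma finite_ex_profiles: "finite (profiles 2 ex_strategies)"
  by (simp add: ex_profiles)

lemma ex_profile_in_profiles:
  "a \<in> {0, 1, 2} \<Longrightarrow> b \<in> {0, 1, 2} \<Longrightarrow> ex_profile a b \<in> profiles 2 ex_strategies"
  by (auto simp: ex_profiles)

lemma sum_ex_profiles:
  "(\<Sum>s\<in>profiles 2 ex_strategies. g s) = (\<Sum>a\<in>{0, 1, 2}. \<Sum>b\<in>{0, 1, 2}. g (ex_profile a b))"
proof -
  have "inj_on (case_prod ex_profile) ({0, 1, 2} \<times> {0, 1, 2})"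
    by (auto simp: inj_on_def)
  then have "(\<Sum>s\<in>profiles 2 ex_strategies. g s)
      = (\<Sum>(a, b)\<in>{0, 1, 2} \<times> {0, 1, 2}. g (ex_profile a b))"
    by (simp add: ex_profiles sum.reindex case_prod_unfold)
  then show ?thesis
    by (simp only: sum.cartesian_product)
qed

lemma ex_EU_expand:
  "ex_EU 1 x = 3 * x (ex_profile 0 0) - x (ex_profile 0 2) + x (ex_profile 1 1)
     - x (ex_profile 1 2) + 3 * x (ex_profile 2 0) + 2 * x (ex_profile 2 1)"
  "ex_EU 2 x = 2 * x (ex_profile 0 0) + 4 * x (ex_profile 0 2) + 6 * x (ex_profile 1 1)
     + 6 * x (ex_profile 1 2) + x (ex_profile 2 2)"
  by (simp_all add: EU_def sum_ex_profiles ex_payoff_def)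

lemma ex_dist_cells:
  assumes "is_dist 2 ex_strategies x"
  shows "0 \<le> x (ex_profile 0 0)" "0 \<le> x (ex_profile 0 1)" "0 \<le> x (ex_profile 0 2)"
    "0 \<le> x (ex_profile 1 0)" "0 \<le> x (ex_profile 1 1)" "0 \<le> x (ex_profile 1 2)"
    "0 \<le> x (ex_profile 2 0)" "0 \<le> x (ex_profile 2 1)" "0 \<le> x (ex_profile 2 2)"
    "x (ex_profile 0 0) + x (ex_profile 0 1) + x (ex_profile 0 2) + x (ex_profile 1 0)
      + x (ex_profile 1 1) + x (ex_profile 1 2) + x (ex_profile 2 0) + x (ex_profile 2 1)
      + x (ex_profile 2 2) = 1"
  using assms unfolding is_dist_def sum_ex_profiles by (simp_all add: add.assoc)

lemma ex_CE_deviation: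
  assumes "x \<in> ex_CE P" "p \<in> P" "a \<in> {0, 1, 2}" "b \<in> {0, 1, 2}" "a \<noteq> b"
  shows "0 \<le> (\<Sum>s\<in>profiles 2 ex_strategies.
                if s p = a then x s * (ex_utility p s - ex_utility p (s(p := b))) else 0)"
proof -
  have "0 \<le> (\<Sum>s\<in>{s\<in>profiles 2 ex_strategies. s p = a}.
                x s * (ex_utility p s - ex_utility p (s(p := b))))"
    using assms unfolding CE_P_def ex_strategies_def by blast
  then show ?thesis
    by (simp add: finite_ex_profiles sum.inter_filter)
qed

text \<open>Obedience of player 1 excludes the cells (0,1), (0,2) and the whole row 1, so a
distribution giving player 2 at least 2 must be the point mass at (0,0).\<close>
lemma ex_leader1_value:
  assumes x: "x \<in> ex_CE {1}" and "2 \<le> ex_EU 2 x"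
  shows "3 \<le> ex_EU 1 x"
proof -
  have "0 \<le> - 2 * x (ex_profile 0 1) - x (ex_profile 0 2)"
    using ex_CE_deviation[OF x, of 1 0 2] by (simp add: sum_ex_profiles ex_payoff_def)
  moreover have "0 \<le> - 3 * x (ex_profile 1 0) - x (ex_profile 1 1) - x (ex_profile 1 2)"
    using ex_CE_deviation[OF x, of 1 1 2] by (simp add: sum_ex_profiles ex_payoff_def)
  moreover have "is_dist 2 ex_strategies x"
    using x by (simp add: CE_P_def)
  ultimately show ?thesis
    using assms(2) ex_dist_cells[of x] unfolding ex_EU_expand by linarith
qed

lemma ex_leader2_value:
  assumes x: "x \<in> ex_CE {2}" and "1 \<le> ex_EU 1 x"
  shows "6 \<le> ex_EU 2 x"
proof -
  have "0 \<le> - 2 * x (ex_profile 0 0) - 6 * x (ex_profile 1 0) - x (ex_profile 2 0)"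
    using ex_CE_deviation[OF x, of 2 0 2] by (simp add: sum_ex_profiles ex_payoff_def)
  moreover have "0 \<le> - 4 * x (ex_profile 0 1) - x (ex_profile 2 1)"
    using ex_CE_deviation[OF x, of 2 1 2] by (simp add: sum_ex_profiles ex_payoff_def)
  moreover have "is_dist 2 ex_strategies x"
    using x by (simp add: CE_P_def)
  ultimately show ?thesis
    using assms(2) ex_dist_cells[of x] unfolding ex_EU_expand by linarith
qed

abbreviation "ex_PS \<equiv> perfectly_stable_set 2 ex_strategies ex_utility {1, 2} {}"

lemma ex_EU_point_dist:
  "a \<in> {0, 1, 2} \<Longrightarrow> b \<in> {0, 1, 2} \<Longrightarrow>
    ex_EU p (point_dist (ex_profile a b)) = ex_payoff p ! a ! b"
  by (simp add: EU_point_dist finite_ex_profiles ex_profile_in_profiles)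

lemma ex_point_dist_in_CE:
  assumes "a \<in> {0, 1, 2}" "b \<in> {0, 1, 2}"
    and "\<And>p c. p \<in> P \<Longrightarrow> c \<in> {0, 1, 2} \<Longrightarrow>
           ex_utility p ((ex_profile a b)(p := c)) \<le> ex_payoff p ! a ! b"
  shows "point_dist (ex_profile a b) \<in> ex_CE P"
  using assms by (intro point_dist_in_CE_P)
    (auto simp: finite_ex_profiles ex_profile_in_profiles ex_strategies_def)

lemma ex_CE_witnesses:
  "point_dist (ex_profile 2 2) \<in> ex_CE {1, 2}"
  "point_dist (ex_profile 0 0) \<in> ex_CE {1}"
  "point_dist (ex_profile 1 1) \<in> ex_CE {2}"
  by (auto intro!: ex_point_dist_in_CE simp: ex_payoff_def)

lemma ex_leader1_threat: "\<exists>yy \<in> ex_PS. ex_EU 2 (yy [1]) = 2"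
proof
  let ?yy = "first_mover_family {1, 2} 1
    (point_dist (ex_profile 0 0)) (point_dist (ex_profile 2 2))"
  show "?yy \<in> ex_PS"
    using ex_CE_witnesses
    by (intro first_mover_family_perfectly_stable) (auto simp: ex_EU_point_dist ex_payoff_def)
  show "ex_EU 2 (?yy [1]) = 2"
    by (simp add: first_mover_family_def ordered_subsets_def ex_EU_point_dist ex_payoff_def)
qed

lemma ex_leader2_threat: "\<exists>yy \<in> ex_PS. ex_EU 1 (yy [2]) = 1"
proof
  let ?yy = "first_mover_family {1, 2} 2
    (point_dist (ex_profile 1 1)) (point_dist (ex_profile 2 2))"
  show "?yy \<in> ex_PS"
    using ex_CE_witnesses
    by (intro first_mover_family_perfectly_stable) (auto simp: ex_EU_point_dist ex_payoff_def)
  show "ex_EU 1 (?yy [2]) = 1"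
    by (simp add: first_mover_family_def ordered_subsets_def ex_EU_point_dist ex_payoff_def)
qed

lemma ex_weighted_payoff_le: "is_dist 2 ex_strategies x \<Longrightarrow> 2 * ex_EU 1 x + 1 * ex_EU 2 x \<le> 8"
  by (rule EU_weighted_le) (auto simp: ex_profiles ex_payoff_def)

lemma ex_SCE_PAPE_empty: "SCE_PAPE 2 ex_strategies ex_utility {1, 2} {} = {}"
proof (rule equals0I)
  fix xx assume "xx \<in> SCE_PAPE 2 ex_strategies ex_utility {1, 2} {}"
  then have PS: "xx \<in> ex_PS" and pareto: "\<And>\<pi>. \<pi> \<in> ordered_subsets {1, 2} \<Longrightarrow>
      xx \<pi> \<in> pareto_opt 2 ex_strategies ex_utility ({1, 2} - set \<pi>) ((\<lambda>yy. yy \<pi>) ` ex_PS)"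
    unfolding SCE_PAPE_def by auto
  have ord: "[] \<in> ordered_subsets {1, 2}" "[1] \<in> ordered_subsets {1, 2}"
    "[2] \<in> ordered_subsets {1, 2::nat}"
    by (auto simp: ordered_subsets_def)
  have CE: "xx [] \<in> ex_CE {}" "xx [1] \<in> ex_CE {1}" "xx [2] \<in> ex_CE {2}"
    using PS ord unfolding perfectly_stable_set_def XX_def by auto
  have stable: "ex_EU 1 (xx [1]) \<le> ex_EU 1 (xx [])" "ex_EU 2 (xx [2]) \<le> ex_EU 2 (xx [])"
    using PS ord(1) unfolding perfectly_stable_set_def stable_at_def by auto
  have "{1, 2} - set [1] = {2::nat}" "{1, 2} - set [2] = {1::nat}"
    by auto
  then have pareto1: "xx [1] \<in> pareto_opt 2 ex_strategies ex_utility {2} ((\<lambda>yy. yy [1]) ` ex_PS)"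
    and pareto2: "xx [2] \<in> pareto_opt 2 ex_strategies ex_utility {1} ((\<lambda>yy. yy [2]) ` ex_PS)"
    using pareto ord by metis+
  have "2 \<le> ex_EU 2 (xx [1])"
    using ex_leader1_threat pareto_opt_singleton_max[OF pareto1] by fastforce
  then have "3 \<le> ex_EU 1 (xx [1])"
    by (rule ex_leader1_value[OF CE(2)])
  moreover have "1 \<le> ex_EU 1 (xx [2])"
    using ex_leader2_threat pareto_opt_singleton_max[OF pareto2] by fastforce
  then have "6 \<le> ex_EU 2 (xx [2])"
    by (rule ex_leader2_value[OF CE(3)])
  moreover have "2 * ex_EU 1 (xx []) + 1 * ex_EU 2 (xx []) \<le> 8"
    using CE(1) by (intro ex_weighted_payoff_le) (simp add: CE_P_def)
  ultimately show False
    using stable by linarith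
qed

theorem proposition1:
  shows "\<exists>(n::nat) (S::nat \<Rightarrow> nat set) (u::nat \<Rightarrow> profile \<Rightarrow> real) L F.
           finite_game n S \<and> stackelberg n L F \<and> SCE_PAPE n S u L F = {}"
proof (intro exI conjI)
  show "finite_game 2 ex_strategies"
    by (simp add: finite_game_def ex_strategies_def)
  show "stackelberg 2 {1, 2} {}"
    by (simp add: stackelberg_def players_2)
  show "SCE_PAPE 2 ex_strategies ex_utility {1, 2} {} = {}"
    by (rule ex_SCE_PAPE_empty)
qed

end
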